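(* Let $(V,g)$ be a Euclidean vector space and $\mathfrak{g}\subseteq\mathfrak{so}(V)$ a nonzero Lie subalgebra. If there is a nonzero spinor $x$ with $\mathfrak{g}x=0$ (for the spin representation of $\mathfrak{spin}(V)\cong\mathfrak{so}(V)$), then $T^{\mathfrak{g}}\neq0$.
   Context: $\Lambda^2V$ is identified with $\mathfrak{so}(V)$ via the metric, with the standard inner product on forms. $T^{\mathfrak{g}}=\sum_kx_k\wedge x_k\in\Lambda^4V$ for an orthonormal basis $\{x_k\}$ of $\mathfrak{g}\subseteq\Lambda^2V$ (the characteristic form of $(\mathfrak{g},V)$). *)

theory Defs
  imports "HOL-Analysis.Analysis"
begin

text \<open>Lambda^2 V is identified with so(V), i.e. with the
skew-symmetric matrices A (A = sum_{i<j} A_ij e_i wedge e_j).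
Lambda^4 V is represented by alternating 4-forms 'n => 'n => 'n => 'n => real.\<close>

definition skew :: "real^'n^'n \<Rightarrow> bool" where
  "skew A \<longleftrightarrow> (\<forall>i j. A $ i $ j = - (A $ j $ i))"

definition lie_subalgebra_so :: "(real^'n^'n) set \<Rightarrow> bool" where
  "lie_subalgebra_so g \<longleftrightarrow> subspace g \<and> (\<forall>A\<in>g. skew A) \<and>
     (\<forall>A\<in>g. \<forall>B\<in>g. A ** B - B ** A \<in> g)"

text \<open>Standard inner product on 2-forms: sum over i<j of A_ij B_ij.\<close>
definition form_inner2 :: "real^'n^'n \<Rightarrow> real^'n^'n \<Rightarrow> real" where
  "form_inner2 A B = (1/2) * (\<Sum>i\<in>UNIV. \<Sum>j\<in>UNIV. A $ i $ j * B $ i $ j)"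

definition orthonormal_basis_of :: "(real^'n^'n) set \<Rightarrow> (real^'n^'n) set \<Rightarrow> bool" where
  "orthonormal_basis_of B g \<longleftrightarrow> finite B \<and> B \<subseteq> g \<and> span B = g \<and>
     (\<forall>X\<in>B. form_inner2 X X = 1) \<and>
     (\<forall>X\<in>B. \<forall>Y\<in>B. X \<noteq> Y \<longrightarrow> form_inner2 X Y = 0)"

text \<open>Wedge product of two 2-forms, as an alternating 4-form:
  (a wedge b)(e_i,e_j,e_k,e_l) = sum over the 6 (2,2)-shuffles.\<close>
definition wedge22 :: "real^'n^'n \<Rightarrow> real^'n^'n \<Rightarrow> 'n \<Rightarrow> 'n \<Rightarrow> 'n \<Rightarrow> 'n \<Rightarrow> real" where
  "wedge22 a b i j k l =
      a$i$j * b$k$l - a$i$k * b$j$l + a$i$l * b$j$k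
    + a$j$k * b$i$l - a$j$l * b$i$k + a$k$l * b$i$j"

text \<open>Characteristic form T^g = sum_k x_k wedge x_k for an orthonormal basis {x_k} of g.\<close>
definition char_form :: "(real^'n^'n) set \<Rightarrow> 'n \<Rightarrow> 'n \<Rightarrow> 'n \<Rightarrow> 'n \<Rightarrow> real" where
  "char_form B = (\<lambda>i j k l. \<Sum>X\<in>B. wedge22 X X i j k l)"

text \<open>A complex Clifford module for (V,g): c i = Clifford multiplication by e_i on
S = complex^'m, with c_i c_j + c_j c_i = -2 delta_ij.\<close>
definition clifford_module :: "('n \<Rightarrow> complex^'m^'m) \<Rightarrow> bool" where
  "clifford_module c \<longleftrightarrow>
     (\<forall>i j. c i ** c j + c j ** c i = mat (if i = j then -2 else 0))"

definition complex_subspace :: "(complex^'m) set \<Rightarrow> bool" where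
  "complex_subspace W \<longleftrightarrow> 0 \<in> W \<and> (\<forall>x\<in>W. \<forall>y\<in>W. x + y \<in> W) \<and>
     (\<forall>a::complex. \<forall>x\<in>W. a *s x \<in> W)"

definition spinor_module :: "('n \<Rightarrow> complex^'m^'m) \<Rightarrow> bool" where
  "spinor_module c \<longleftrightarrow> clifford_module c \<and>
     (\<forall>W. complex_subspace W \<and> (\<forall>i. \<forall>x\<in>W. c i *v x \<in> W) \<longrightarrow> W = {0} \<or> W = UNIV)"

text \<open>Spin representation of so(V) = Lambda^2 V on spinors:
  e_i wedge e_j acts as (1/2) e_i e_j, i.e. A acts as (1/4) sum_{i,j} A_ij c_i c_j.\<close>
definition spin_act :: "('n \<Rightarrow> complex^'m^'m) \<Rightarrow> real^'n^'n \<Rightarrow> complex^'m \<Rightarrow> complex^'m" where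
  "spin_act c A x = (\<Sum>i\<in>UNIV. \<Sum>j\<in>UNIV.
      complex_of_real (A $ i $ j / 4) *s (c i *v (c j *v x)))"

end

theory Submission
  imports Defs
begin

(*
  Write Q_X = sum_ij X_ij c_i c_j for the Clifford action of a 2-form X
  (so the spin action of X is Q_X / 4), and let a 4-form F act on spinors by
  F . x = sum_ijkl F_ijkl c_i c_j c_k c_l x.  Using only the Clifford relations
  c_i c_j + c_j c_i = -2 delta_ij, one computes for every skew X

      (X wedge X) . x  =  6 Q_X (Q_X x) + 24 |X|^2 x.

  If X is a unit vector of g and g annihilates x, the first term vanishes, so
  (X wedge X) . x = 24 x.  Summing over an orthonormal basis B of g gives
  T^g . x = 24 |B| x; hence T^g = 0 forces B to be empty, i.e. g = 0.
*)

definition clifford_action2 :: "('n::finite \<Rightarrow> complex^'m^'m) \<Rightarrow> ('n \<Rightarrow> 'n \<Rightarrow> real) \<Rightarrow> complex^'m \<Rightarrow> complex^'m" where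
  "clifford_action2 c a x = (\<Sum>i\<in>UNIV. \<Sum>j\<in>UNIV. a i j *\<^sub>R (c i *v (c j *v x)))"

definition clifford_action4 :: "('n::finite \<Rightarrow> complex^'m^'m) \<Rightarrow> ('n \<Rightarrow> 'n \<Rightarrow> 'n \<Rightarrow> 'n \<Rightarrow> real) \<Rightarrow> complex^'m \<Rightarrow> complex^'m" where
  "clifford_action4 c F x = (\<Sum>i\<in>UNIV. \<Sum>j\<in>UNIV. \<Sum>k\<in>UNIV. \<Sum>l\<in>UNIV.
      F i j k l *\<^sub>R (c i *v (c j *v (c k *v (c l *v x)))))"

lemma mat_mult_vector: "(mat z :: 'a::semiring_1^'m^'m) *v v = z *s v"
  by (simp add: vec_eq_iff matrix_vector_mult_def mat_def if_distrib[of "\<lambda>a. a * _"] cong: if_cong)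

lemma of_real_smult: "complex_of_real r *s (v::complex^'m) = r *\<^sub>R v"
  by (simp add: vec_eq_iff vector_scaleR_component) (simp add: scaleR_conv_of_real)

lemma clifford_anticomm:
  assumes "clifford_module c"
  shows "c a *v (c b *v w) = - (c b *v (c a *v w)) - (if a = b then 2 *\<^sub>R w else 0)"
proof -
  have "c a *v (c b *v w) + c b *v (c a *v w) = (c a ** c b + c b ** c a) *v w"
    by (simp add: matrix_vector_mul_assoc matrix_vector_mult_add_rdistrib)
  also have "\<dots> = complex_of_real (if a = b then -2 else 0) *s w"
    using assms by (simp add: clifford_module_def mat_mult_vector)
  also have "\<dots> = - (if a = b then 2 *\<^sub>R w else 0)"
    by (simp add: of_real_smult)
  finally show ?thesis by (simp add: algebra_simps eq_diff_eq' flip: add_eq_0_iff2)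
qed

lemma sum_kronecker:
  fixes f :: "'a::finite \<Rightarrow> real" and w :: "'c::real_vector"
  shows "(\<Sum>k\<in>UNIV. f k *\<^sub>R (if j = k then w else 0)) = f j *\<^sub>R w"
proof -
  have "(\<Sum>k\<in>UNIV. f k *\<^sub>R (if j = k then w else 0)) = (\<Sum>k\<in>UNIV. if j = k then f j *\<^sub>R w else 0)"
    by (rule sum.cong) auto
  thus ?thesis by simp
qed

text \<open>A symmetric form acts on spinors as minus its trace: symmetrising the
  Clifford relation kills everything but the diagonal.\<close>
lemma clifford_action2_symmetric:
  assumes cl: "clifford_module c" and sym: "\<And>i j. a i j = a j i"
  shows "clifford_action2 c a x = - (\<Sum>i\<in>UNIV. a i i) *\<^sub>R x"
proof -
  define M where "M = clifford_action2 c a x"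
  have "M = (\<Sum>i\<in>UNIV. \<Sum>j\<in>UNIV. a i j *\<^sub>R (- (c j *v (c i *v x)) - (if i = j then 2 *\<^sub>R x else 0)))"
    unfolding M_def clifford_action2_def
    by (intro sum.cong refl) (subst clifford_anticomm[OF cl], rule refl)
  also have "\<dots> = - (\<Sum>i\<in>UNIV. \<Sum>j\<in>UNIV. a i j *\<^sub>R (c j *v (c i *v x)))
       - (\<Sum>i\<in>UNIV. \<Sum>j\<in>UNIV. a i j *\<^sub>R (if i = j then 2 *\<^sub>R x else 0))"
    by (simp only: scaleR_diff_right scaleR_minus_right sum_subtractf sum_negf)
  also have "(\<Sum>i\<in>UNIV. \<Sum>j\<in>UNIV. a i j *\<^sub>R (c j *v (c i *v x))) = M"
    unfolding M_def clifford_action2_def by (subst sum.swap) (simp only: sym)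
  also have "(\<Sum>i\<in>UNIV. \<Sum>j\<in>UNIV. a i j *\<^sub>R (if i = j then 2 *\<^sub>R x else 0))
      = 2 *\<^sub>R ((\<Sum>i\<in>UNIV. a i i) *\<^sub>R x)"
    by (simp only: sum_kronecker) (simp add: scaleR_sum_left scaleR_sum_right mult.commute)
  finally have fixpoint: "M = - M - 2 *\<^sub>R ((\<Sum>i\<in>UNIV. a i i) *\<^sub>R x)" .
  hence "M + M = - (2 *\<^sub>R ((\<Sum>i\<in>UNIV. a i i) *\<^sub>R x))"
    by (subst (2) fixpoint) simp
  hence "2 *\<^sub>R M = 2 *\<^sub>R (- (\<Sum>i\<in>UNIV. a i i) *\<^sub>R x)"
    by (simp add: scaleR_2)
  thus ?thesis unfolding M_def by (simp only: scaleR_cancel_left) simp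
qed

lemma clifford_action4_swap23:
  assumes cl: "clifford_module c"
  shows "clifford_action4 c F x = - clifford_action4 c (\<lambda>i j k l. F i k j l) x
           - 2 *\<^sub>R clifford_action2 c (\<lambda>i l. \<Sum>j\<in>UNIV. F i j j l) x"
proof -
  have move: "c i *v (c j *v (c k *v y)) = - (c i *v (c k *v (c j *v y))) - (if j = k then 2 *\<^sub>R (c i *v y) else 0)"
    for i j k y
    by (simp add: clifford_anticomm[OF cl, of j k] matrix_vector_mult_diff_distrib
        linear_neg[OF matrix_vector_mul_linear] linear_scale[OF matrix_vector_mul_linear])
  have "clifford_action4 c F x = - (\<Sum>i\<in>UNIV. \<Sum>j\<in>UNIV. \<Sum>k\<in>UNIV. \<Sum>l\<in>UNIV.
          F i j k l *\<^sub>R (c i *v (c k *v (c j *v (c l *v x)))))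
       - (\<Sum>i\<in>UNIV. \<Sum>j\<in>UNIV. \<Sum>k\<in>UNIV. \<Sum>l\<in>UNIV.
          F i j k l *\<^sub>R (if j = k then 2 *\<^sub>R (c i *v (c l *v x)) else 0))"
  proof -
    have "clifford_action4 c F x = (\<Sum>i\<in>UNIV. \<Sum>j\<in>UNIV. \<Sum>k\<in>UNIV. \<Sum>l\<in>UNIV.
          F i j k l *\<^sub>R (- (c i *v (c k *v (c j *v (c l *v x))))
            - (if j = k then 2 *\<^sub>R (c i *v (c l *v x)) else 0)))"
      unfolding clifford_action4_def by (intro sum.cong refl) (subst move, rule refl)
    thus ?thesis by (simp only: scaleR_diff_right scaleR_minus_right sum_subtractf sum_negf)
  qed
  also have "(\<Sum>i\<in>UNIV. \<Sum>j\<in>UNIV. \<Sum>k\<in>UNIV. \<Sum>l\<in>UNIV.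
          F i j k l *\<^sub>R (c i *v (c k *v (c j *v (c l *v x)))))
      = clifford_action4 c (\<lambda>i j k l. F i k j l) x"
    unfolding clifford_action4_def by (rule sum.cong[OF refl], rule sum.swap)
  also have "(\<Sum>i\<in>UNIV. \<Sum>j\<in>UNIV. \<Sum>k\<in>UNIV. \<Sum>l\<in>UNIV.
          F i j k l *\<^sub>R (if j = k then 2 *\<^sub>R (c i *v (c l *v x)) else 0))
      = 2 *\<^sub>R clifford_action2 c (\<lambda>i l. \<Sum>j\<in>UNIV. F i j j l) x"
  proof -
    have "(\<Sum>i\<in>UNIV. \<Sum>j\<in>UNIV. \<Sum>k\<in>UNIV. \<Sum>l\<in>UNIV.
          F i j k l *\<^sub>R (if j = k then 2 *\<^sub>R (c i *v (c l *v x)) else 0))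
      = (\<Sum>i\<in>UNIV. \<Sum>j\<in>UNIV. \<Sum>l\<in>UNIV. \<Sum>k\<in>UNIV.
          F i j k l *\<^sub>R (if j = k then 2 *\<^sub>R (c i *v (c l *v x)) else 0))"
      by (rule sum.cong[OF refl], rule sum.cong[OF refl], rule sum.swap)
    also have "\<dots> = (\<Sum>i\<in>UNIV. \<Sum>j\<in>UNIV. \<Sum>l\<in>UNIV. F i j j l *\<^sub>R 2 *\<^sub>R (c i *v (c l *v x)))"
      by (simp only: sum_kronecker)
    also have "\<dots> = (\<Sum>i\<in>UNIV. \<Sum>l\<in>UNIV. \<Sum>j\<in>UNIV. F i j j l *\<^sub>R 2 *\<^sub>R (c i *v (c l *v x)))"
      by (rule sum.cong[OF refl], rule sum.swap)
    finally show ?thesis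
      by (simp add: clifford_action2_def scaleR_sum_left scaleR_sum_right mult.commute)
  qed
  finally show ?thesis .
qed

lemma clifford_action4_swap34:
  assumes cl: "clifford_module c"
  shows "clifford_action4 c F x = - clifford_action4 c (\<lambda>i j k l. F i j l k) x
           - 2 *\<^sub>R clifford_action2 c (\<lambda>i j. \<Sum>k\<in>UNIV. F i j k k) x"
proof -
  have move: "c i *v (c j *v (c k *v (c l *v x))) = - (c i *v (c j *v (c l *v (c k *v x))))
      - (if k = l then 2 *\<^sub>R (c i *v (c j *v x)) else 0)" for i j k l
    by (simp add: clifford_anticomm[OF cl, of k l] matrix_vector_mult_diff_distrib
        linear_neg[OF matrix_vector_mul_linear] linear_scale[OF matrix_vector_mul_linear])
  have "clifford_action4 c F x = - (\<Sum>i\<in>UNIV. \<Sum>j\<in>UNIV. \<Sum>k\<in>UNIV. \<Sum>l\<in>UNIV.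
          F i j k l *\<^sub>R (c i *v (c j *v (c l *v (c k *v x)))))
       - (\<Sum>i\<in>UNIV. \<Sum>j\<in>UNIV. \<Sum>k\<in>UNIV. \<Sum>l\<in>UNIV.
          F i j k l *\<^sub>R (if k = l then 2 *\<^sub>R (c i *v (c j *v x)) else 0))"
  proof -
    have "clifford_action4 c F x = (\<Sum>i\<in>UNIV. \<Sum>j\<in>UNIV. \<Sum>k\<in>UNIV. \<Sum>l\<in>UNIV.
          F i j k l *\<^sub>R (- (c i *v (c j *v (c l *v (c k *v x))))
            - (if k = l then 2 *\<^sub>R (c i *v (c j *v x)) else 0)))"
      unfolding clifford_action4_def by (intro sum.cong refl) (subst move, rule refl)
    thus ?thesis by (simp only: scaleR_diff_right scaleR_minus_right sum_subtractf sum_negf)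
  qed
  also have "(\<Sum>i\<in>UNIV. \<Sum>j\<in>UNIV. \<Sum>k\<in>UNIV. \<Sum>l\<in>UNIV.
          F i j k l *\<^sub>R (c i *v (c j *v (c l *v (c k *v x)))))
      = clifford_action4 c (\<lambda>i j k l. F i j l k) x"
    unfolding clifford_action4_def by (rule sum.cong[OF refl], rule sum.cong[OF refl], rule sum.swap)
  also have "(\<Sum>i\<in>UNIV. \<Sum>j\<in>UNIV. \<Sum>k\<in>UNIV. \<Sum>l\<in>UNIV.
          F i j k l *\<^sub>R (if k = l then 2 *\<^sub>R (c i *v (c j *v x)) else 0))
      = 2 *\<^sub>R clifford_action2 c (\<lambda>i j. \<Sum>k\<in>UNIV. F i j k k) x"
    by (simp only: sum_kronecker) (simp add: clifford_action2_def scaleR_sum_left scaleR_sum_right mult.commute)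
  finally show ?thesis .
qed

lemma clifford_action4_add:
  "clifford_action4 c (\<lambda>i j k l. F i j k l + G i j k l) x = clifford_action4 c F x + clifford_action4 c G x"
  by (simp add: clifford_action4_def scaleR_left_distrib sum.distrib)

lemma clifford_action4_scale:
  "clifford_action4 c (\<lambda>i j k l. r * F i j k l) x = r *\<^sub>R clifford_action4 c F x"
  by (simp add: clifford_action4_def scaleR_sum_right)

lemma clifford_action4_sum:
  assumes "finite B"
  shows "clifford_action4 c (\<lambda>i j k l. \<Sum>X\<in>B. F X i j k l) x = (\<Sum>X\<in>B. clifford_action4 c (F X) x)"
  using assms
proof (induction B rule: finite_induct)
  case empty
  show ?case by (simp add: clifford_action4_def)
next
  case (insert Y B)
  thus ?case by (simp add: clifford_action4_add)
qed

lemma clifford_action4_product: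
  "clifford_action4 c (\<lambda>i j k l. a i j * b k l) x = clifford_action2 c a (clifford_action2 c b x)"
  by (simp add: clifford_action2_def clifford_action4_def scaleR_sum_right
      linear_sum[OF matrix_vector_mul_linear] linear_scale[OF matrix_vector_mul_linear])

lemma clifford_action2_square_skew:
  assumes cl: "clifford_module c" and sk: "skew X"
  shows "clifford_action2 c (\<lambda>i l. \<Sum>j\<in>UNIV. X$i$j * X$j$l) x = (2 * form_inner2 X X) *\<^sub>R x"
proof -
  have skX: "X$i$j = - X$j$i" for i j using sk unfolding skew_def by blast
  have "clifford_action2 c (\<lambda>i l. \<Sum>j\<in>UNIV. X$i$j * X$j$l) x
      = - (\<Sum>i\<in>UNIV. \<Sum>j\<in>UNIV. X$i$j * X$j$i) *\<^sub>R x"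
  proof (rule clifford_action2_symmetric[OF cl])
    fix i l
    show "(\<Sum>j\<in>UNIV. X$i$j * X$j$l) = (\<Sum>j\<in>UNIV. X$l$j * X$j$i)"
      by (rule sum.cong[OF refl]) (simp add: skX[of i] skX[of _ l])
  qed
  also have "- (\<Sum>i\<in>UNIV. \<Sum>j\<in>UNIV. X$i$j * X$j$i) = 2 * form_inner2 X X"
  proof -
    have "X$i$j * X$j$i = - (X$i$j * X$i$j)" for i j using skX[of j i] by simp
    thus ?thesis by (simp add: form_inner2_def sum_negf)
  qed
  finally show ?thesis .
qed

lemma clifford_action2_gram:
  assumes cl: "clifford_module c"
  shows "clifford_action2 c (\<lambda>i j. \<Sum>k\<in>UNIV. X$i$k * X$j$k) x = - (2 * form_inner2 X X) *\<^sub>R x"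
  by (subst clifford_action2_symmetric[OF cl]) (simp_all add: form_inner2_def mult.commute)

text \<open>Collecting the three contributions to X wedge X (stated in a general real
  vector space, where no ring multiplication interferes with normalisation).\<close>
lemma wedge_square_coefficients:
  fixes q x :: "'a::real_vector"
  shows "2 *\<^sub>R q + ((-2) *\<^sub>R (- q - (4 * n) *\<^sub>R x) + 2 *\<^sub>R (q + (8 * n) *\<^sub>R x))
    = 6 *\<^sub>R q + (24 * n) *\<^sub>R x"
  by (simp add: algebra_simps flip: scaleR_left_distrib)

text \<open>Main identity: (X wedge X) acts as 6 Q_X^2 + 24 |X|^2.  The three index
  patterns X_ij X_kl, X_ik X_jl, X_il X_jk are reduced to Q_X^2 by the reordering rules.\<close>
lemma clifford_action4_wedge_square:
  assumes cl: "clifford_module c" and sk: "skew X"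
  defines "Q \<equiv> clifford_action2 c (\<lambda>i j. X$i$j)"
  shows "clifford_action4 c (wedge22 X X) x = 6 *\<^sub>R Q (Q x) + (24 * form_inner2 X X) *\<^sub>R x"
proof -
  define n where "n = form_inner2 X X"
  have P1: "clifford_action4 c (\<lambda>i j k l. X$i$j * X$k$l) x = Q (Q x)"
    unfolding Q_def by (rule clifford_action4_product)
  have P2: "clifford_action4 c (\<lambda>i j k l. X$i$k * X$j$l) x = - Q (Q x) - (4 * n) *\<^sub>R x"
    by (subst clifford_action4_swap23[OF cl])
      (simp add: P1 clifford_action2_square_skew[OF cl sk] n_def)
  have P3: "clifford_action4 c (\<lambda>i j k l. X$i$l * X$j$k) x = Q (Q x) + (8 * n) *\<^sub>R x"
  proof -
    have "clifford_action4 c (\<lambda>i j k l. X$i$l * X$j$k) x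
        = - (- Q (Q x) - (4 * n) *\<^sub>R x) - 2 *\<^sub>R (- (2 * n) *\<^sub>R x)"
      by (subst clifford_action4_swap34[OF cl]) (simp only: P2 clifford_action2_gram[OF cl] n_def)
    also have "\<dots> = Q (Q x) + ((4 * n) + (4 * n)) *\<^sub>R x"
      by (simp only: scaleR_left_distrib scaleR_scaleR minus_diff_eq) simp
    finally show ?thesis by simp
  qed
  have "wedge22 X X = (\<lambda>i j k l. 2 * (X$i$j * X$k$l) + ((-2) * (X$i$k * X$j$l) + 2 * (X$i$l * X$j$k)))"
    by (simp add: wedge22_def fun_eq_iff algebra_simps)
  hence "clifford_action4 c (wedge22 X X) x
      = 2 *\<^sub>R Q (Q x) + ((-2) *\<^sub>R (- Q (Q x) - (4 * n) *\<^sub>R x) + 2 *\<^sub>R (Q (Q x) + (8 * n) *\<^sub>R x))"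
    by (simp only: clifford_action4_add clifford_action4_scale P1 P2 P3)
  also have "\<dots> = 6 *\<^sub>R Q (Q x) + (24 * n) *\<^sub>R x"
    by (rule wedge_square_coefficients)
  finally show ?thesis unfolding n_def .
qed

lemma spin_act_clifford_action2:
  "spin_act c A x = (1/4) *\<^sub>R clifford_action2 c (\<lambda>i j. A$i$j) x"
  unfolding spin_act_def of_real_smult by (simp add: clifford_action2_def scaleR_sum_right)

lemma clifford_action4_wedge_square_annihilated:
  assumes cl: "clifford_module c" and sk: "skew X" and unit: "form_inner2 X X = 1"
    and annihilated: "spin_act c X x = 0"
  shows "clifford_action4 c (wedge22 X X) x = 24 *\<^sub>R x"
proof -
  have "clifford_action2 c (\<lambda>i j. X$i$j) x = 0"
    using annihilated by (simp add: spin_act_clifford_action2)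
  thus ?thesis
    by (simp add: clifford_action4_wedge_square[OF cl sk] unit clifford_action2_def)
qed

lemma clifford_action4_char_form:
  assumes cl: "clifford_module c" and fin: "finite B"
    and basis: "\<And>X. X \<in> B \<Longrightarrow> skew X \<and> form_inner2 X X = 1 \<and> spin_act c X x = 0"
  shows "clifford_action4 c (char_form B) x = (24 * real (card B)) *\<^sub>R x"
proof -
  have "clifford_action4 c (char_form B) x = (\<Sum>X\<in>B. clifford_action4 c (wedge22 X X) x)"
    unfolding char_form_def by (rule clifford_action4_sum[OF fin])
  also have "\<dots> = (\<Sum>X\<in>B. 24 *\<^sub>R x)"
    using basis by (intro sum.cong refl clifford_action4_wedge_square_annihilated[OF cl]) auto
  also have "\<dots> = (24 * real (card B)) *\<^sub>R x"
    by (simp only: sum_constant_scaleR scaleR_scaleR mult.commute)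
  finally show ?thesis .
qed

theorem proposition7p1:
  fixes g B :: "(real^'n^'n) set" and c :: "'n \<Rightarrow> complex^'m^'m" and x :: "complex^'m"
  assumes "lie_subalgebra_so g" and "g \<noteq> {0}"
    and "orthonormal_basis_of B g"
    and "spinor_module c"
    and "x \<noteq> 0" and "\<forall>A\<in>g. spin_act c A x = 0"
  shows "char_form B \<noteq> (\<lambda>i j k l. 0)"
proof
  assume vanishing: "char_form B = (\<lambda>i j k l. 0)"
  have cl: "clifford_module c" using assms(4) by (simp add: spinor_module_def)
  have fin: "finite B" and span_B: "span B = g"
    using assms(3) by (auto simp: orthonormal_basis_of_def)
  have basis: "skew X \<and> form_inner2 X X = 1 \<and> spin_act c X x = 0" if "X \<in> B" for X
    using that assms(1,3,6) by (auto simp: orthonormal_basis_of_def lie_subalgebra_so_def)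
  have "(24 * real (card B)) *\<^sub>R x = clifford_action4 c (char_form B) x"
    by (rule clifford_action4_char_form[OF cl fin basis, symmetric])
  also have "\<dots> = 0"
    using vanishing by (simp add: clifford_action4_def)
  finally have "card B = 0" using assms(5) by simp
  hence "g = {0}" using fin span_B by simp
  with assms(2) show False ..
qed

end
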